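(* Let $P$ be a finite graded connected poset with rank function $\rho$, let $G$ be a group of automorphisms of $P$, and let $\theta$ be the equivalence relation whose classes are the $G$-orbits. Then (1) $\rho(p)=\rho(q)$ whenever $p\,\theta\,q$; and (2) the quotient $P/G:=(P/\theta,\leqslant_\theta)$ is a graded poset (with rank function $[p]\mapsto\rho(p)$).
   Context: A poset is graded if there is an integer-valued rank function $\rho$ with $p<q\Rightarrow\rho(p)<\rho(q)$ and $p\lessdot q\Rightarrow\rho(q)=\rho(p)+1$, where $p\lessdot q$ means $p<q$ with nothing strictly between. A poset is connected if its Hasse diagram (the graph with vertices $P$ and an edge for each covering relation) is connected. For an equivalence relation $\theta$ with classes $[p]$, $[p]\leqslant_\theta[q]$ iff there exist $p'\in[p]$, $q'\in[q]$ with $p'\leqslant q'$. *)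

theory Defs
  imports Main
begin

definition poset_on :: "'a set \<Rightarrow> ('a \<Rightarrow> 'a \<Rightarrow> bool) \<Rightarrow> bool" where
  "poset_on P le \<longleftrightarrow>
     (\<forall>p\<in>P. le p p) \<and>
     (\<forall>p\<in>P. \<forall>q\<in>P. le p q \<and> le q p \<longrightarrow> p = q) \<and>
     (\<forall>p\<in>P. \<forall>q\<in>P. \<forall>r\<in>P. le p q \<and> le q r \<longrightarrow> le p r)"

definition less_on :: "'a set \<Rightarrow> ('a \<Rightarrow> 'a \<Rightarrow> bool) \<Rightarrow> 'a \<Rightarrow> 'a \<Rightarrow> bool" where
  "less_on P le p q \<longleftrightarrow> p \<in> P \<and> q \<in> P \<and> le p q \<and> p \<noteq> q"

definition covers_on :: "'a set \<Rightarrow> ('a \<Rightarrow> 'a \<Rightarrow> bool) \<Rightarrow> 'a \<Rightarrow> 'a \<Rightarrow> bool" where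
  "covers_on P le p q \<longleftrightarrow> less_on P le p q \<and>
     \<not> (\<exists>r\<in>P. less_on P le p r \<and> less_on P le r q)"

definition rank_function :: "'a set \<Rightarrow> ('a \<Rightarrow> 'a \<Rightarrow> bool) \<Rightarrow> ('a \<Rightarrow> int) \<Rightarrow> bool" where
  "rank_function P le \<rho> \<longleftrightarrow>
     (\<forall>p q. less_on P le p q \<longrightarrow> \<rho> p < \<rho> q) \<and>
     (\<forall>p q. covers_on P le p q \<longrightarrow> \<rho> q = \<rho> p + 1)"

definition graded_poset_with :: "'a set \<Rightarrow> ('a \<Rightarrow> 'a \<Rightarrow> bool) \<Rightarrow> ('a \<Rightarrow> int) \<Rightarrow> bool" where
  "graded_poset_with P le \<rho> \<longleftrightarrow> poset_on P le \<and> rank_function P le \<rho>"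

definition hasse_edges :: "'a set \<Rightarrow> ('a \<Rightarrow> 'a \<Rightarrow> bool) \<Rightarrow> ('a \<times> 'a) set" where
  "hasse_edges P le = {(p, q). covers_on P le p q \<or> covers_on P le q p}"

definition connected_poset :: "'a set \<Rightarrow> ('a \<Rightarrow> 'a \<Rightarrow> bool) \<Rightarrow> bool" where
  "connected_poset P le \<longleftrightarrow> (\<forall>p\<in>P. \<forall>q\<in>P. (p, q) \<in> (hasse_edges P le)\<^sup>*)"

text \<open>Automorphisms of the poset and groups of them (acting on P; values outside P irrelevant).\<close>
definition poset_automorphism :: "'a set \<Rightarrow> ('a \<Rightarrow> 'a \<Rightarrow> bool) \<Rightarrow> ('a \<Rightarrow> 'a) \<Rightarrow> bool" where
  "poset_automorphism P le g \<longleftrightarrow> bij_betw g P P \<and>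
     (\<forall>p\<in>P. \<forall>q\<in>P. le p q \<longleftrightarrow> le (g p) (g q))"

definition automorphism_group :: "'a set \<Rightarrow> ('a \<Rightarrow> 'a \<Rightarrow> bool) \<Rightarrow> ('a \<Rightarrow> 'a) set \<Rightarrow> bool" where
  "automorphism_group P le G \<longleftrightarrow>
     (\<forall>g\<in>G. poset_automorphism P le g) \<and>
     id \<in> G \<and>
     (\<forall>g\<in>G. \<forall>h\<in>G. g \<circ> h \<in> G) \<and>
     (\<forall>g\<in>G. \<exists>h\<in>G. \<forall>p\<in>P. h (g p) = p \<and> g (h p) = p)"

definition orbit_rel :: "'a set \<Rightarrow> ('a \<Rightarrow> 'a) set \<Rightarrow> ('a \<times> 'a) set" where
  "orbit_rel P G = {(p, q). p \<in> P \<and> q \<in> P \<and> (\<exists>g\<in>G. g p = q)}"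

definition quot_le :: "('a \<Rightarrow> 'a \<Rightarrow> bool) \<Rightarrow> 'a set \<Rightarrow> 'a set \<Rightarrow> bool" where
  "quot_le le C D \<longleftrightarrow> (\<exists>p\<in>C. \<exists>q\<in>D. le p q)"

end

theory Submission
  imports Defs
begin

text \<open>An automorphism g maps covers to covers, so along every edge of the Hasse diagram the
  shift \<rho>(g p) - \<rho> p is unchanged; by connectedness it is a constant c. Since g permutes the
  finite set P, summing \<rho> over P gives |P| c = 0, so automorphisms preserve rank. For the
  quotient, antisymmetry and strict monotonicity of the rank follow because classes have a
  single rank; transitivity uses an automorphism to align the two representatives of the middle
  class; and a cover [p] \<lessdot> [q] with p \<le> q is refined to a cover p \<lessdot> r \<le> q in P, whose
  class lies strictly between [p] and [q] unless it equals [q].\<close>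

lemma poset_automorphism_less_on_iff:
  assumes "poset_automorphism P le g" "p \<in> P" "q \<in> P"
  shows "less_on P le (g p) (g q) \<longleftrightarrow> less_on P le p q"
  using assms bij_betw_apply[of g P P] bij_betw_imp_inj_on[of g P P]
  unfolding poset_automorphism_def less_on_def by (metis inj_onD)

lemma poset_automorphism_covers_on:
  assumes g: "poset_automorphism P le g" and cov: "covers_on P le p q"
  shows "covers_on P le (g p) (g q)"
  unfolding covers_on_def
proof (intro conjI notI)
  have pq: "p \<in> P" "q \<in> P" using cov unfolding covers_on_def less_on_def by auto
  show "less_on P le (g p) (g q)"
    using cov poset_automorphism_less_on_iff[OF g pq] unfolding covers_on_def by blast
  assume "\<exists>r\<in>P. less_on P le (g p) r \<and> less_on P le r (g q)"
  then obtain r where r: "r \<in> P" "less_on P le (g p) r" "less_on P le r (g q)" by blast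
  obtain s where s: "s \<in> P" "r = g s"
    using g r(1) unfolding poset_automorphism_def bij_betw_def by blast
  have "less_on P le p s" "less_on P le s q"
    using r s pq poset_automorphism_less_on_iff[OF g] by auto
  with s(1) cov show False unfolding covers_on_def by blast
qed

lemma poset_automorphism_hasse_edge_rank:
  assumes rk: "rank_function P le \<rho>" and g: "poset_automorphism P le g"
    and e: "(p, q) \<in> hasse_edges P le"
  shows "\<rho> (g q) - \<rho> (g p) = \<rho> q - \<rho> p"
proof -
  have cov: "\<And>x y. covers_on P le x y \<Longrightarrow> \<rho> y = \<rho> x + 1"
    using rk unfolding rank_function_def by blast
  from e consider "covers_on P le p q" | "covers_on P le q p" unfolding hasse_edges_def by blast
  then show ?thesis
  proof cases
    case 1
    with cov[OF 1] cov[OF poset_automorphism_covers_on[OF g 1]] show ?thesis by simp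
  next
    case 2
    with cov[OF 2] cov[OF poset_automorphism_covers_on[OF g 2]] show ?thesis by simp
  qed
qed

lemma poset_automorphism_rank_shift_constant:
  assumes rk: "rank_function P le \<rho>" and conn: "connected_poset P le"
    and g: "poset_automorphism P le g" and p: "p \<in> P" and q: "q \<in> P"
  shows "\<rho> (g q) - \<rho> q = \<rho> (g p) - \<rho> p"
proof -
  have "(p, q) \<in> (hasse_edges P le)\<^sup>*" using conn p q unfolding connected_poset_def by blast
  then show ?thesis
  proof (induction rule: rtrancl_induct)
    case (step y z)
    then show ?case using poset_automorphism_hasse_edge_rank[OF rk g step.hyps(2)] by simp
  qed simp
qed

lemma poset_automorphism_preserves_rank:
  assumes fin: "finite P" and rk: "rank_function P le \<rho>" and conn: "connected_poset P le"
    and g: "poset_automorphism P le g" and p: "p \<in> P"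
  shows "\<rho> (g p) = \<rho> p"
proof -
  define c where "c = \<rho> (g p) - \<rho> p"
  have "(\<Sum>q\<in>P. \<rho> q) = (\<Sum>q\<in>P. \<rho> (g q))"
    using sum.reindex_bij_betw[of g P P \<rho>] g unfolding poset_automorphism_def by simp
  also have "\<dots> = (\<Sum>q\<in>P. \<rho> q + c)"
    using poset_automorphism_rank_shift_constant[OF rk conn g p] unfolding c_def
    by (intro sum.cong) (auto simp: algebra_simps)
  finally have "int (card P) * c = 0" by (simp add: sum.distrib)
  moreover have "card P > 0" using fin p card_gt_0_iff by blast
  ultimately show ?thesis unfolding c_def by simp
qed

lemma orbit_rel_equiv:
  assumes G: "automorphism_group P le G"
  shows "equiv P (orbit_rel P G)"
proof (rule equivI)
  show "refl_on P (orbit_rel P G)"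
    using G unfolding refl_on_def orbit_rel_def automorphism_group_def by (auto intro: bexI[of _ id])
  show "sym (orbit_rel P G)"
    using G unfolding sym_def orbit_rel_def automorphism_group_def by fastforce
  show "trans (orbit_rel P G)"
    using G unfolding trans_def orbit_rel_def automorphism_group_def by (auto, metis comp_apply)
  show "orbit_rel P G \<subseteq> P \<times> P" unfolding orbit_rel_def by auto
qed

lemma orbit_class_closed:
  assumes G: "automorphism_group P le G" and C: "C \<in> P // orbit_rel P G"
    and x: "x \<in> C" and g: "g \<in> G"
  shows "g x \<in> C"
proof -
  have xP: "x \<in> P" using C x orbit_rel_equiv[OF G] in_quotient_imp_subset by blast
  then have "g x \<in> P"
    using G g unfolding automorphism_group_def poset_automorphism_def bij_betw_def by blast
  with xP g have "(x, g x) \<in> orbit_rel P G" unfolding orbit_rel_def by blast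
  then show ?thesis using C x orbit_rel_equiv[OF G] by (meson in_quotient_imp_closed)
qed

lemma orbit_class_transitive:
  assumes G: "automorphism_group P le G" and C: "C \<in> P // orbit_rel P G"
    and "x \<in> C" "y \<in> C"
  shows "\<exists>g\<in>G. g x = y"
  using assms orbit_rel_equiv[OF G] quotient_eq_iff unfolding orbit_rel_def by fastforce

lemma the_elem_image_class:
  assumes "equiv P \<theta>" "\<forall>p q. (p, q) \<in> \<theta> \<longrightarrow> f p = f q" "C \<in> P // \<theta>" "x \<in> C"
  shows "the_elem (f ` C) = f x"
proof -
  have "f ` C = {f x}" using assms quotient_eq_iff[OF assms(1,3,3)] by auto
  then show ?thesis by simp
qed

lemma rank_function_mono:
  assumes "rank_function P le \<rho>" "p \<in> P" "q \<in> P" "le p q"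
  shows "\<rho> p \<le> \<rho> q"
  using assms unfolding rank_function_def less_on_def by (cases "p = q") (auto intro: less_imp_le)

lemma finite_poset_cover_below:
  assumes fin: "finite P" and po: "poset_on P le" and rk: "rank_function P le \<rho>"
    and pq: "less_on P le p q"
  shows "\<exists>r. covers_on P le p r \<and> le r q"
proof -
  define S where "S = {r \<in> P. less_on P le p r \<and> le r q}"
  have "q \<in> S" using pq po unfolding S_def less_on_def poset_on_def by blast
  moreover have "finite S" using fin unfolding S_def by simp
  ultimately obtain r where rS: "r \<in> S" and rmin: "\<And>s. s \<in> S \<Longrightarrow> \<rho> r \<le> \<rho> s"
    using ex_min_if_finite[of "\<rho> ` S"] by (metis empty_iff finite_imageI image_iff not_le)
  have "covers_on P le p r"
    unfolding covers_on_def
  proof (intro conjI notI)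
    show "less_on P le p r" using rS unfolding S_def by blast
    assume "\<exists>s\<in>P. less_on P le p s \<and> less_on P le s r"
    then obtain s where s: "less_on P le p s" "less_on P le s r" by blast
    have "le s q" using s rS po pq unfolding S_def less_on_def poset_on_def by blast
    then have "\<rho> r \<le> \<rho> s" using s rmin unfolding S_def less_on_def by blast
    moreover have "\<rho> s < \<rho> r" using s(2) rk unfolding rank_function_def by blast
    ultimately show False by simp
  qed
  with rS show ?thesis unfolding S_def by blast
qed

lemma quot_less_on_representatives:
  assumes eqv: "equiv P \<theta>" and CD: "less_on (P // \<theta>) (quot_le le) C D"
  obtains p q where "p \<in> C" "q \<in> D" "less_on P le p q"
proof -
  from CD obtain p q where pq: "p \<in> C" "q \<in> D" "le p q"
    unfolding less_on_def quot_le_def by blast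
  have "C \<in> P // \<theta>" "D \<in> P // \<theta>" "C \<noteq> D" using CD unfolding less_on_def by auto
  with pq eqv have "p \<in> P" "q \<in> P" "p \<noteq> q"
    by (auto dest: in_quotient_imp_subset quotient_disj[of P \<theta> C D])
  with pq that show ?thesis unfolding less_on_def by blast
qed

lemma orbit_class_rank:
  assumes G: "automorphism_group P le G"
    and rank_orbit: "\<forall>p q. (p, q) \<in> orbit_rel P G \<longrightarrow> \<rho> p = \<rho> q"
    and "C \<in> P // orbit_rel P G" "x \<in> C"
  shows "the_elem (\<rho> ` C) = \<rho> x"
  using the_elem_image_class[OF orbit_rel_equiv[OF G] rank_orbit] assms(3,4) .

lemma quot_le_antisym_orbit:
  assumes G: "automorphism_group P le G" and rk: "rank_function P le \<rho>"
    and rank_orbit: "\<forall>p q. (p, q) \<in> orbit_rel P G \<longrightarrow> \<rho> p = \<rho> q"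
    and C: "C \<in> P // orbit_rel P G" and D: "D \<in> P // orbit_rel P G"
    and "quot_le le C D" "quot_le le D C"
  shows "C = D"
proof -
  note eqv = orbit_rel_equiv[OF G]
  obtain p q q' p' where pq: "p \<in> C" "q \<in> D" "le p q" "q' \<in> D" "p' \<in> C" "le q' p'"
    using assms(6,7) unfolding quot_le_def by blast
  have inP: "p \<in> P" "q \<in> P" "p' \<in> P" "q' \<in> P"
    using pq in_quotient_imp_subset[OF eqv C] in_quotient_imp_subset[OF eqv D] by auto
  have "\<rho> p \<le> \<rho> q" "\<rho> q' \<le> \<rho> p'"
    using pq inP rank_function_mono[OF rk] by blast+
  moreover have "\<rho> p' = \<rho> p" "\<rho> q' = \<rho> q"
    using orbit_class_rank[OF G rank_orbit C] orbit_class_rank[OF G rank_orbit D] pq by metis+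
  ultimately have "\<rho> p = \<rho> q" by simp
  then have "p = q" using pq inP rk unfolding rank_function_def less_on_def by (metis less_irrefl)
  then show "C = D" using pq quotient_disj[OF eqv C D] by blast
qed

lemma quot_le_trans_orbit:
  assumes G: "automorphism_group P le G" and po: "poset_on P le"
    and C: "C \<in> P // orbit_rel P G" and D: "D \<in> P // orbit_rel P G"
    and E: "E \<in> P // orbit_rel P G"
    and "quot_le le C D" "quot_le le D E"
  shows "quot_le le C E"
proof -
  note eqv = orbit_rel_equiv[OF G]
  obtain p q q' r where pq: "p \<in> C" "q \<in> D" "le p q" "q' \<in> D" "r \<in> E" "le q' r"
    using assms(6,7) unfolding quot_le_def by blast
  have inP: "p \<in> P" "q \<in> P" "q' \<in> P" "r \<in> P"
    using pq in_quotient_imp_subset[OF eqv C] in_quotient_imp_subset[OF eqv D]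
      in_quotient_imp_subset[OF eqv E] by auto
  obtain g where g: "g \<in> G" "g q = q'" using orbit_class_transitive[OF G D pq(2,4)] by blast
  have gp: "g p \<in> C" using orbit_class_closed[OF G C pq(1) g(1)] .
  then have "g p \<in> P" using in_quotient_imp_subset[OF eqv C] by auto
  moreover have "le (g p) q'"
    using G g pq inP unfolding automorphism_group_def poset_automorphism_def by metis
  ultimately have "le (g p) r" using po pq(6) inP(3,4) unfolding poset_on_def by blast
  with gp pq(5) show ?thesis unfolding quot_le_def by blast
qed

lemma quotient_poset_on:
  assumes G: "automorphism_group P le G" and po: "poset_on P le" and rk: "rank_function P le \<rho>"
    and rank_orbit: "\<forall>p q. (p, q) \<in> orbit_rel P G \<longrightarrow> \<rho> p = \<rho> q"
  shows "poset_on (P // orbit_rel P G) (quot_le le)"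
  unfolding poset_on_def
proof (intro conjI ballI impI)
  fix C assume C: "C \<in> P // orbit_rel P G"
  obtain x where "x \<in> C" using C orbit_rel_equiv[OF G] in_quotient_imp_non_empty by blast
  moreover have "x \<in> P" if "x \<in> C" for x
    using C that orbit_rel_equiv[OF G] in_quotient_imp_subset by blast
  ultimately show "quot_le le C C" using po unfolding quot_le_def poset_on_def by blast
next
  fix C D
  assume "C \<in> P // orbit_rel P G" "D \<in> P // orbit_rel P G" "quot_le le C D \<and> quot_le le D C"
  then show "C = D" using quot_le_antisym_orbit[OF G rk rank_orbit] by blast
next
  fix C D E
  assume "C \<in> P // orbit_rel P G" "D \<in> P // orbit_rel P G" "E \<in> P // orbit_rel P G"
    and "quot_le le C D \<and> quot_le le D E"
  then show "quot_le le C E" using quot_le_trans_orbit[OF G po] by blast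
qed

lemma quotient_rank_less:
  assumes G: "automorphism_group P le G" and rk: "rank_function P le \<rho>"
    and rank_orbit: "\<forall>p q. (p, q) \<in> orbit_rel P G \<longrightarrow> \<rho> p = \<rho> q"
    and CD: "less_on (P // orbit_rel P G) (quot_le le) C D"
  shows "the_elem (\<rho> ` C) < the_elem (\<rho> ` D)"
proof -
  have C: "C \<in> P // orbit_rel P G" and D: "D \<in> P // orbit_rel P G"
    using CD unfolding less_on_def by auto
  obtain p q where pq: "p \<in> C" "q \<in> D" "less_on P le p q"
    using quot_less_on_representatives[OF orbit_rel_equiv[OF G] CD] .
  then show ?thesis
    using orbit_class_rank[OF G rank_orbit] C D rk unfolding rank_function_def by simp
qed

lemma quotient_rank_covers:
  assumes fin: "finite P" and G: "automorphism_group P le G"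
    and po: "poset_on P le" and rk: "rank_function P le \<rho>"
    and rank_orbit: "\<forall>p q. (p, q) \<in> orbit_rel P G \<longrightarrow> \<rho> p = \<rho> q"
    and cov: "covers_on (P // orbit_rel P G) (quot_le le) C D"
  shows "the_elem (\<rho> ` D) = the_elem (\<rho> ` C) + 1"
proof -
  note eqv = orbit_rel_equiv[OF G]
  note rk_cls = orbit_class_rank[OF G rank_orbit]
  have CD: "less_on (P // orbit_rel P G) (quot_le le) C D" using cov unfolding covers_on_def by blast
  then have C: "C \<in> P // orbit_rel P G" and D: "D \<in> P // orbit_rel P G"
    unfolding less_on_def by auto
  obtain p q where pq: "p \<in> C" "q \<in> D" "less_on P le p q"
    using quot_less_on_representatives[OF eqv CD] .
  obtain r where pr: "covers_on P le p r" and rq: "le r q"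
    using finite_poset_cover_below[OF fin po rk pq(3)] by blast
  have r: "r \<in> P" and rank_r: "\<rho> r = \<rho> p + 1"
    using pr rk unfolding covers_on_def less_on_def rank_function_def by auto
  define E where "E = orbit_rel P G `` {r}"
  have E: "E \<in> P // orbit_rel P G" "r \<in> E"
    using quotientI[OF r] equiv_class_self[OF eqv r] unfolding E_def by auto
  have "C \<noteq> E"
  proof
    assume "C = E"
    then have "\<rho> r = \<rho> p" using rk_cls[OF C pq(1)] rk_cls[OF E] by simp
    with rank_r show False by simp
  qed
  with C E pq(1) pr have "less_on (P // orbit_rel P G) (quot_le le) C E"
    unfolding quot_le_def less_on_def covers_on_def by blast
  moreover have "quot_le le E D" using E(2) pq(2) rq unfolding quot_le_def by blast
  ultimately have "E = D" using cov E(1) D unfolding covers_on_def less_on_def by blast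
  then show ?thesis using rk_cls C E pq(1) rank_r by simp
qed

theorem mainTheorem11:
  fixes P :: "'a set" and le :: "'a \<Rightarrow> 'a \<Rightarrow> bool" and \<rho> :: "'a \<Rightarrow> int"
    and G :: "('a \<Rightarrow> 'a) set"
  assumes "finite P"
    and "graded_poset_with P le \<rho>"
    and "connected_poset P le"
    and "automorphism_group P le G"
  shows "(\<forall>p q. (p, q) \<in> orbit_rel P G \<longrightarrow> \<rho> p = \<rho> q)
       \<and> graded_poset_with (P // orbit_rel P G) (quot_le le) (\<lambda>C. the_elem (\<rho> ` C))"
proof -
  have po: "poset_on P le" and rk: "rank_function P le \<rho>"
    using assms(2) unfolding graded_poset_with_def by auto
  have rank_orbit: "\<forall>p q. (p, q) \<in> orbit_rel P G \<longrightarrow> \<rho> p = \<rho> q"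
    using poset_automorphism_preserves_rank[OF assms(1) rk assms(3)] assms(4)
    unfolding orbit_rel_def automorphism_group_def by auto
  then have "rank_function (P // orbit_rel P G) (quot_le le) (\<lambda>C. the_elem (\<rho> ` C))"
    using quotient_rank_less[OF assms(4) rk rank_orbit]
      quotient_rank_covers[OF assms(1,4) po rk rank_orbit]
    unfolding rank_function_def by blast
  with rank_orbit show ?thesis
    using quotient_poset_on[OF assms(4) po rk rank_orbit] unfolding graded_poset_with_def by blast
qed

end
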